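(* Let $p$ be an odd prime and let $G$ be a pro-$p$-group with $G/[G,G]\cong(\mathbb{Z}/p\mathbb{Z})^d$ for some $d\ge 0$. Let $\rho:G\to\mathrm{GL}_n^{(1)}(\mathbb{Z}_p)$ be a continuous homomorphism. If $\rho(G)\ne1$ then $\rho(G)\not\subseteq\mathrm{GL}_n^{(2)}(\mathbb{Z}_p)$.
   Context: $\mathrm{GL}_n^{(k)}(\mathbb{Z}_p)=\{X\in\mathrm{GL}_n(\mathbb{Z}_p): X\equiv 1 \bmod p^k\}$; $[G,G]$ denotes the closed commutator subgroup. *)

theory Defs
  imports "HOL-Analysis.Analysis" "HOL-Algebra.Algebra"
begin

definition topological_group :: "('a, 'b) monoid_scheme \<Rightarrow> 'a topology \<Rightarrow> bool" where
  "topological_group G T \<longleftrightarrow> group G \<and> topspace T = carrier G \<and>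
     continuous_map (prod_topology T T) T (\<lambda>(x, y). x \<otimes>\<^bsub>G\<^esub> y) \<and>
     continuous_map T T (\<lambda>x. inv\<^bsub>G\<^esub> x)"

definition totally_disconnected_space :: "'a topology \<Rightarrow> bool" where
  "totally_disconnected_space T \<longleftrightarrow>
     (\<forall>S. connectedin T S \<longrightarrow> (\<forall>x\<in>S. \<forall>y\<in>S. x = y))"

definition pro_p_group :: "nat \<Rightarrow> ('a, 'b) monoid_scheme \<Rightarrow> 'a topology \<Rightarrow> bool" where
  "pro_p_group p G T \<longleftrightarrow> topological_group G T \<and> compact_space T \<and> Hausdorff_space T \<and>
     totally_disconnected_space T \<and>
     (\<forall>N. N \<lhd> G \<longrightarrow> openin T N \<longrightarrow> (\<exists>e. card (rcosets\<^bsub>G\<^esub> N) = p ^ e))"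

definition closed_commutator :: "('a, 'b) monoid_scheme \<Rightarrow> 'a topology \<Rightarrow> 'a set" where
  "closed_commutator G T = T closure_of (derived G (carrier G))"

text \<open>A matrix over Z_p is represented as the compatible system of its reductions mod p^k:
  M k i j is the (i,j) entry reduced mod p^k, an integer in [0, p^k); entries with
  indices outside [0,n) are 0. (Z_p = lim Z/p^k, so M_n(Z_p) = lim M_n(Z/p^k).)\<close>

definition padic_mat :: "nat \<Rightarrow> nat \<Rightarrow> (nat \<Rightarrow> nat \<Rightarrow> nat \<Rightarrow> int) set" where
  "padic_mat p n = {M. (\<forall>k i j. 0 \<le> M k i j \<and> M k i j < int p ^ k) \<and>
      (\<forall>k i j. \<not> (i < n \<and> j < n) \<longrightarrow> M k i j = 0) \<and>
      (\<forall>k i j. M k i j = M (Suc k) i j mod (int p ^ k))}"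

definition padic_one :: "nat \<Rightarrow> nat \<Rightarrow> nat \<Rightarrow> nat \<Rightarrow> nat \<Rightarrow> int" where
  "padic_one p n = (\<lambda>k i j. if i = j \<and> i < n then 1 mod (int p ^ k) else 0)"

definition padic_mult :: "nat \<Rightarrow> nat \<Rightarrow> (nat \<Rightarrow> nat \<Rightarrow> nat \<Rightarrow> int) \<Rightarrow> (nat \<Rightarrow> nat \<Rightarrow> nat \<Rightarrow> int)
    \<Rightarrow> nat \<Rightarrow> nat \<Rightarrow> nat \<Rightarrow> int" where
  "padic_mult p n A B = (\<lambda>k i j. if i < n \<and> j < n
      then (\<Sum>l<n. A k i l * B k l j) mod (int p ^ k) else 0)"

text \<open>GL_n^{(m)}(Z_p) = {X in GL_n(Z_p). X = 1 mod p^m} (for m \<ge> 1; such X are automatically invertible).\<close>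
definition GL_cong :: "nat \<Rightarrow> nat \<Rightarrow> nat \<Rightarrow> (nat \<Rightarrow> nat \<Rightarrow> nat \<Rightarrow> int) set" where
  "GL_cong p n m = {M \<in> padic_mat p n. M m = padic_one p n m}"

definition GL1_group :: "nat \<Rightarrow> nat \<Rightarrow> (nat \<Rightarrow> nat \<Rightarrow> nat \<Rightarrow> int) monoid" where
  "GL1_group p n = \<lparr>carrier = GL_cong p n 1, mult = padic_mult p n, one = padic_one p n\<rparr>"

definition GL1_topology :: "nat \<Rightarrow> nat \<Rightarrow> (nat \<Rightarrow> nat \<Rightarrow> nat \<Rightarrow> int) topology" where
  "GL1_topology p n = topology_generated_by
     {{M \<in> GL_cong p n 1. M k = A} | k A. True}"

end

theory Submission
  imports Defs "HOL-Number_Theory.Cong"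
begin

text \<open>Suppose \<rho>(G) is nontrivial but contained in GL_n^(2)(Z_p), and let k \<ge> 2 be maximal with
  \<rho>(G) \<subseteq> GL_n^(k)(Z_p). Since (1 + p^k A)(1 + p^k B) = 1 + p^k (A + B) + p^2k AB, the map
  g \<mapsto> \<rho>(g) - 1 mod p^2k is additive. It therefore kills commutators modulo p^(k+2), so the closed
  congruence subgroup \<rho>^-1(GL_n^(k+2)) contains [G,G]. As G/[G,G] has exponent p, every g^p lies in
  [G,G]; but \<rho>(g^p) - 1 \<equiv> p (\<rho>(g) - 1) mod p^2k, which forces \<rho>(g) \<in> GL_n^(k+1) for all g and
  contradicts the maximality of k.\<close>

lemma nat_boundary:
  fixes P :: "nat \<Rightarrow> bool"
  assumes "a \<le> b" "P a" "\<not> P b"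
  shows "\<exists>k. a \<le> k \<and> P k \<and> \<not> P (Suc k)"
  using assms
proof (induction b rule: dec_induct)
  case (step b)
  then show ?case by (cases "P b") auto
qed simp

lemma product_group_pow:
  assumes "f \<in> carrier (product_group I G)" "\<And>i. i \<in> I \<Longrightarrow> group (G i)"
  shows "f [^]\<^bsub>product_group I G\<^esub> (m::nat) = (\<lambda>i\<in>I. f i [^]\<^bsub>G i\<^esub> m)"
proof (induction m)
  case (Suc m)
  have "f [^]\<^bsub>product_group I G\<^esub> Suc m = (\<lambda>i\<in>I. f i [^]\<^bsub>G i\<^esub> m \<otimes>\<^bsub>G i\<^esub> f i)"
    by (simp add: Suc cong: restrict_cong)
  then show ?case by simp
qed simp

lemma product_integer_mod_group_pow_eq_one:
  assumes "f \<in> carrier (product_group I (\<lambda>_. integer_mod_group p))"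
  shows "f [^]\<^bsub>product_group I (\<lambda>_. integer_mod_group p)\<^esub> p = \<one>\<^bsub>product_group I (\<lambda>_. integer_mod_group p)\<^esub>"
  using assms by (simp add: product_group_pow)

lemma (in group) iso_pow_eq_one:
  assumes "G \<cong> H" "group H" "\<And>y. y \<in> carrier H \<Longrightarrow> y [^]\<^bsub>H\<^esub> m = \<one>\<^bsub>H\<^esub>" "x \<in> carrier G"
  shows "x [^] (m::nat) = \<one>"
proof -
  obtain \<phi> where \<phi>: "\<phi> \<in> iso G H" using assms(1) unfolding is_iso_def by blast
  then have hom: "\<phi> \<in> hom G H" and inj: "inj_on \<phi> (carrier G)"
    by (auto simp: iso_def bij_betw_def)
  have "\<phi> (x [^] m) = \<phi> x [^]\<^bsub>H\<^esub> m" by (rule hom_nat_pow[OF hom assms(4) is_group assms(2)])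
  also have "\<dots> = \<phi> \<one>" using assms hom hom_one[OF hom is_group assms(2)] by (simp add: hom_in_carrier)
  finally show ?thesis using inj assms(4) by (simp add: inj_on_eq_iff)
qed

lemma (in normal) pow_mem_if_quotient_exponent:
  assumes "\<And>A. A \<in> carrier (G Mod H) \<Longrightarrow> A [^]\<^bsub>G Mod H\<^esub> m = \<one>\<^bsub>G Mod H\<^esub>" "g \<in> carrier G"
  shows "g [^] (m::nat) \<in> H"
proof (rule coset_join1)
  have "H #> g \<in> carrier (G Mod H)" using assms(2) by (simp add: carrier_FactGroup)
  from assms(1)[OF this] show "H #> g [^] m = H" by (simp add: FactGroup_pow assms(2))
qed (use assms(2) in \<open>simp_all add: subgroup_axioms\<close>)

locale cong_additive = group G for G (structure) +
  fixes L :: "'a \<Rightarrow> int" and Q :: int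
  assumes cong_additive: "\<lbrakk>g \<in> carrier G; h \<in> carrier G\<rbrakk> \<Longrightarrow> [L (g \<otimes> h) = L g + L h] (mod Q)"
begin

lemma cong_additive_one: "[L \<one> = 0] (mod Q)"
  using cong_additive[OF one_closed one_closed] by (simp add: cong_iff_dvd_diff)

lemma cong_additive_inv:
  assumes "g \<in> carrier G"
  shows "[L (inv g) = - L g] (mod Q)"
proof -
  have "[L \<one> = L (inv g) + L g] (mod Q)"
    using cong_additive[OF inv_closed[OF assms] assms] assms by simp
  from cong_trans[OF cong_sym[OF this] cong_additive_one] show ?thesis
    by (simp add: cong_iff_dvd_diff)
qed

lemma cong_additive_pow:
  assumes "g \<in> carrier G"
  shows "[L (g [^] m) = int m * L g] (mod Q)"
proof (induction m)
  case 0
  then show ?case using cong_additive_one by simp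
next
  case (Suc m)
  have "[L (g [^] m \<otimes> g) = L (g [^] m) + L g] (mod Q)"
    using assms by (intro cong_additive) simp_all
  also have "[L (g [^] m) + L g = int m * L g + L g] (mod Q)"
    by (intro cong_add Suc cong_refl)
  finally show ?case by (simp add: algebra_simps)
qed

lemma cong_additive_commutator:
  assumes "g \<in> carrier G" "h \<in> carrier G"
  shows "[L (g \<otimes> h \<otimes> inv g \<otimes> inv h) = 0] (mod Q)"
proof -
  have "[L (g \<otimes> h \<otimes> inv g \<otimes> inv h) = L (g \<otimes> h \<otimes> inv g) + L (inv h)] (mod Q)"
    using assms by (intro cong_additive) simp_all
  also have "[L (g \<otimes> h \<otimes> inv g) + L (inv h) = (L (g \<otimes> h) + L (inv g)) + L (inv h)] (mod Q)"
    using assms by (intro cong_add cong_additive cong_refl) simp_all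
  also have "[(L (g \<otimes> h) + L (inv g)) + L (inv h) = ((L g + L h) + - L g) + - L h] (mod Q)"
    using assms by (intro cong_add cong_additive cong_additive_inv)
  finally show ?thesis by simp
qed

lemma derived_subset_dvd:
  assumes "d dvd Q"
  shows "derived G (carrier G) \<subseteq> {g \<in> carrier G. d dvd L g}"
proof -
  have dvd_iff: "d dvd L g \<longleftrightarrow> d dvd L'" if "[L g = L'] (mod Q)" for g L'
    using cong_dvd_iff[OF cong_dvd_modulus[OF that assms]] .
  have "subgroup {g \<in> carrier G. d dvd L g} G"
  proof (rule subgroupI)
    show "{g \<in> carrier G. d dvd L g} \<noteq> {}"
      using dvd_iff[OF cong_additive_one] by auto
  next
    fix g assume "g \<in> {g \<in> carrier G. d dvd L g}"
    then show "inv g \<in> {g \<in> carrier G. d dvd L g}"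
      using dvd_iff[OF cong_additive_inv] by auto
  next
    fix g h assume "g \<in> {g \<in> carrier G. d dvd L g}" "h \<in> {g \<in> carrier G. d dvd L g}"
    then show "g \<otimes> h \<in> {g \<in> carrier G. d dvd L g}"
      using dvd_iff[OF cong_additive] by auto
  qed auto
  moreover have "derived_set G (carrier G) \<subseteq> {g \<in> carrier G. d dvd L g}"
    using dvd_iff[OF cong_additive_commutator] by auto
  ultimately show ?thesis
    unfolding derived_def by (rule generate_subgroup_incl[rotated])
qed

end

lemma continuous_map_left_translation:
  assumes "topological_group G T" "x \<in> carrier G"
  shows "continuous_map T T (\<lambda>y. x \<otimes>\<^bsub>G\<^esub> y)"
proof -
  have "continuous_map T (prod_topology T T) (\<lambda>y. (x, y))"
    using assms by (intro continuous_map_pairedI) (auto simp: topological_group_def)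
  with assms(1) show ?thesis
    using continuous_map_compose by (fastforce simp: topological_group_def o_def)
qed

lemma continuous_map_right_translation:
  assumes "topological_group G T" "x \<in> carrier G"
  shows "continuous_map T T (\<lambda>y. y \<otimes>\<^bsub>G\<^esub> x)"
proof -
  have "continuous_map T (prod_topology T T) (\<lambda>y. (y, x))"
    using assms by (intro continuous_map_pairedI) (auto simp: topological_group_def)
  with assms(1) show ?thesis
    using continuous_map_compose by (fastforce simp: topological_group_def o_def)
qed

lemma closure_of_invariant:
  assumes "continuous_map T T f" "f ` S \<subseteq> S"
  shows "f ` (T closure_of S) \<subseteq> T closure_of S"
  using continuous_map_image_closure_subset[OF assms(1)] closure_of_mono[OF assms(2)] by blast

lemma subgroup_closure_of:
  fixes G (structure)
  assumes tg: "topological_group G T" and H: "subgroup H G"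
  shows "subgroup (T closure_of H) G"
proof -
  define K where "K = T closure_of H"
  interpret group G using tg by (simp add: topological_group_def)
  have carrier: "K \<subseteq> carrier G" and "H \<subseteq> K"
    using tg closure_of_subset_topspace[of T H] closure_of_subset[of H T] subgroup.subset[OF H]
    by (auto simp: topological_group_def K_def)
  have HK: "a \<otimes> b \<in> K" if a: "a \<in> H" and b: "b \<in> K" for a b
  proof -
    have "a \<in> carrier G" using a subgroup.subset[OF H] by blast
    moreover have "(\<lambda>y. a \<otimes> y) ` H \<subseteq> H" using a subgroup.m_closed[OF H] by blast
    ultimately have "(\<lambda>y. a \<otimes> y) ` K \<subseteq> K"
      unfolding K_def by (intro closure_of_invariant continuous_map_left_translation[OF tg])
    with b show ?thesis by blast
  qed
  show ?thesis unfolding K_def[symmetric]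
  proof (rule subgroupI[OF carrier])
    show "K \<noteq> {}" using \<open>H \<subseteq> K\<close> subgroup.one_closed[OF H] by blast
  next
    fix a assume "a \<in> K"
    moreover have "(\<lambda>x. inv x) ` K \<subseteq> K"
      unfolding K_def using tg H
      by (intro closure_of_invariant) (auto simp: topological_group_def subgroup_def)
    ultimately show "inv a \<in> K" by blast
  next
    fix a b assume ab: "a \<in> K" "b \<in> K"
    have "(\<lambda>y. y \<otimes> b) ` K \<subseteq> T closure_of ((\<lambda>y. y \<otimes> b) ` H)"
      unfolding K_def using continuous_map_right_translation[OF tg] ab carrier
      by (intro continuous_map_image_closure_subset) blast
    also have "\<dots> \<subseteq> T closure_of K" using HK ab(2) by (intro closure_of_mono) blast
    also have "\<dots> = K" by (simp add: K_def)
    finally show "a \<otimes> b \<in> K" using ab by auto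
  qed
qed

lemma normal_closure_of:
  fixes G (structure)
  assumes tg: "topological_group G T" and N: "N \<lhd> G"
  shows "(T closure_of N) \<lhd> G"
proof -
  define K where "K = T closure_of N"
  interpret group G using tg by (simp add: topological_group_def)
  interpret N: normal N G by (rule N)
  have "x \<otimes> h \<otimes> inv x \<in> K" if x: "x \<in> carrier G" and h: "h \<in> K" for x h
  proof -
    have "continuous_map T T (\<lambda>y. x \<otimes> y \<otimes> inv x)"
      using continuous_map_compose[OF continuous_map_left_translation[OF tg x]
          continuous_map_right_translation[OF tg inv_closed[OF x]]]
      by (simp add: o_def)
    then have "(\<lambda>y. x \<otimes> y \<otimes> inv x) ` K \<subseteq> K"
      unfolding K_def by (rule closure_of_invariant) (use x N.inv_op_closed2 in auto)
    with h show ?thesis by blast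
  qed
  with subgroup_closure_of[OF tg N.subgroup_axioms] show ?thesis
    by (simp add: normal_inv_iff K_def)
qed

definition deviation :: "nat \<Rightarrow> (nat \<Rightarrow> nat \<Rightarrow> nat \<Rightarrow> int) \<Rightarrow> nat \<Rightarrow> nat \<Rightarrow> int" where
  "deviation m M i j = M m i j - (if i = j then 1 else 0)"

lemma padic_matD:
  assumes "M \<in> padic_mat p n"
  shows "0 \<le> M k i j" "M k i j < int p ^ k" "\<not> (i < n \<and> j < n) \<Longrightarrow> M k i j = 0"
    and "M k i j = M (Suc k) i j mod int p ^ k"
  using assms unfolding padic_mat_def by blast+

lemma padic_mat_reduce:
  assumes M: "M \<in> padic_mat p n" and "a \<le> b"
  shows "M a i j = M b i j mod int p ^ a"
  using \<open>a \<le> b\<close>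
proof (induction b rule: dec_induct)
  case base
  show ?case using padic_matD(1,2)[OF M] by simp
next
  case (step b)
  have "int p ^ a dvd int p ^ b" using step.hyps by (simp add: le_imp_power_dvd)
  then show ?case using step.IH padic_matD(4)[OF M, of b i j] by (simp add: mod_mod_cancel)
qed

lemma GL_cong_iff_dvd_deviation:
  assumes M: "M \<in> padic_mat p n" and "m \<le> b"
  shows "M \<in> GL_cong p n m \<longleftrightarrow> (\<forall>i<n. \<forall>j<n. int p ^ m dvd deviation b M i j)"
proof -
  have outside: "M m i j = padic_one p n m i j" if "\<not> (i < n \<and> j < n)" for i j
    using padic_matD(3)[OF M] that by (auto simp: padic_one_def)
  have inside: "M m i j = padic_one p n m i j \<longleftrightarrow> int p ^ m dvd deviation b M i j"
    if "i < n" "j < n" for i j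
  proof -
    have "padic_one p n m i j = (if i = j then 1 else 0) mod int p ^ m"
      using that by (simp add: padic_one_def)
    with padic_mat_reduce[OF M \<open>m \<le> b\<close>, of i j] show ?thesis
      by (simp add: deviation_def mod_eq_dvd_iff)
  qed
  have "M m = padic_one p n m \<longleftrightarrow> (\<forall>i<n. \<forall>j<n. M m i j = padic_one p n m i j)"
    using outside by (auto simp: fun_eq_iff)
  with inside M show ?thesis by (simp add: GL_cong_def)
qed

lemma GL_cong_antimono:
  assumes "a \<le> b"
  shows "GL_cong p n b \<subseteq> GL_cong p n a"
proof
  fix M assume M: "M \<in> GL_cong p n b"
  then have padic: "M \<in> padic_mat p n" by (simp add: GL_cong_def)
  have "int p ^ a dvd int p ^ b" using assms by (simp add: le_imp_power_dvd)
  moreover have "\<forall>i<n. \<forall>j<n. int p ^ b dvd deviation b M i j"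
    using M GL_cong_iff_dvd_deviation[OF padic order_refl] by blast
  ultimately have "\<forall>i<n. \<forall>j<n. int p ^ a dvd deviation b M i j"
    using dvd_trans by blast
  then show "M \<in> GL_cong p n a" using GL_cong_iff_dvd_deviation[OF padic assms] by blast
qed

lemma eq_padic_one_if_in_all_GL_cong:
  assumes "\<And>m. M \<in> GL_cong p n m"
  shows "M = padic_one p n"
  using assms by (auto simp: GL_cong_def)

lemma topspace_GL1_topology: "topspace (GL1_topology p n) = GL_cong p n 1"
  unfolding GL1_topology_def by auto

lemma closedin_GL_cong: "closedin (GL1_topology p n) (GL_cong p n m \<inter> GL_cong p n 1)"
proof -
  let ?U = "\<Union>{{M \<in> GL_cong p n 1. M m = A} | A. A \<noteq> padic_one p n m}"
  have "GL_cong p n 1 - (GL_cong p n m \<inter> GL_cong p n 1) = {M \<in> GL_cong p n 1. M m \<noteq> padic_one p n m}"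
    unfolding GL_cong_def by blast
  also have "\<dots> = ?U" by blast
  finally have complement: "GL_cong p n 1 - (GL_cong p n m \<inter> GL_cong p n 1) = ?U" .
  have "openin (GL1_topology p n) ?U"
    unfolding GL1_topology_def
    by (rule openin_Union) (auto intro: topology_generated_by_Basis)
  then show ?thesis
    unfolding closedin_def topspace_GL1_topology complement by simp
qed

lemma deviation_padic_mult_cong:
  assumes M: "M \<in> GL_cong p n k" and N: "N \<in> GL_cong p n k" and ij: "i < n" "j < n"
  shows "[deviation (2*k) (padic_mult p n M N) i j
          = deviation (2*k) M i j + deviation (2*k) N i j] (mod int p ^ (2*k))"
proof -
  let ?Q = "int p ^ (2*k)" and ?\<delta> = "\<lambda>i j. if i = j then 1 else 0 :: int"
  define A where "A = deviation (2*k) M"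
  define B where "B = deviation (2*k) N"
  have "\<forall>a<n. \<forall>b<n. int p ^ k dvd A a b" "\<forall>a<n. \<forall>b<n. int p ^ k dvd B a b"
    using M N GL_cong_iff_dvd_deviation[of _ p n k "2*k"] unfolding A_def B_def
    by (auto simp: GL_cong_def)
  then have "?Q dvd A i l * B l j" if "l < n" for l
    using ij that by (auto simp: mult_2 power_add intro: mult_dvd_mono)
  then have products: "[(\<Sum>l<n. A i l * B l j) = 0] (mod ?Q)"
    by (auto simp: cong_0_iff intro: dvd_sum)
  have "(\<Sum>l<n. M (2*k) i l * N (2*k) l j) = (\<Sum>l<n. (?\<delta> i l + A i l) * (?\<delta> l j + B l j))"
    by (simp add: A_def B_def deviation_def)
  also have "\<dots> = (\<Sum>l<n. ?\<delta> i l * ?\<delta> l j) + (\<Sum>l<n. ?\<delta> i l * B l j)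
      + (\<Sum>l<n. A i l * ?\<delta> l j) + (\<Sum>l<n. A i l * B l j)"
    by (simp add: algebra_simps sum.distrib)
  also have "\<dots> = ?\<delta> i j + B i j + A i j + (\<Sum>l<n. A i l * B l j)"
    using ij by (simp add: if_distrib[of "\<lambda>x. x * _"] if_distrib[of "\<lambda>x. _ * x"]
        cong: if_cong)
  finally have expand: "(\<Sum>l<n. M (2*k) i l * N (2*k) l j)
      = ?\<delta> i j + A i j + B i j + (\<Sum>l<n. A i l * B l j)" by simp
  have "[deviation (2*k) (padic_mult p n M N) i j = (\<Sum>l<n. M (2*k) i l * N (2*k) l j) - ?\<delta> i j] (mod ?Q)"
    using ij by (simp add: deviation_def padic_mult_def cong_def mod_diff_left_eq)
  also have "(\<Sum>l<n. M (2*k) i l * N (2*k) l j) - ?\<delta> i j = A i j + B i j + (\<Sum>l<n. A i l * B l j)"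
    using expand by simp
  also have "[\<dots> = A i j + B i j + 0] (mod ?Q)"
    by (intro cong_add cong_refl products)
  finally show ?thesis by (simp add: A_def B_def)
qed

lemma cong_additive_deviation:
  assumes G: "group G" and \<rho>: "\<rho> \<in> hom G (GL1_group p n)"
    and level: "\<And>g. g \<in> carrier G \<Longrightarrow> \<rho> g \<in> GL_cong p n k" and ij: "i < n" "j < n"
  shows "cong_additive G (\<lambda>g. deviation (2*k) (\<rho> g) i j) (int p ^ (2*k))"
proof -
  have "\<rho> (g \<otimes>\<^bsub>G\<^esub> h) = padic_mult p n (\<rho> g) (\<rho> h)" if "g \<in> carrier G" "h \<in> carrier G" for g h
    using \<rho> that by (simp add: hom_def GL1_group_def)
  with level ij show ?thesis
    by (simp add: cong_additive_def cong_additive_axioms_def G deviation_padic_mult_cong)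
qed

lemma hom_GL1_group_padic_mat:
  assumes "\<rho> \<in> hom G (GL1_group p n)" "g \<in> carrier G"
  shows "\<rho> g \<in> padic_mat p n"
  using assms by (auto simp: hom_def GL1_group_def GL_cong_def)

lemma derived_subset_GL_cong:
  assumes G: "group G" and \<rho>: "\<rho> \<in> hom G (GL1_group p n)"
    and level: "\<And>g. g \<in> carrier G \<Longrightarrow> \<rho> g \<in> GL_cong p n k" and "m \<le> 2*k"
  shows "derived G (carrier G) \<subseteq> {g \<in> carrier G. \<rho> g \<in> GL_cong p n m}"
proof
  fix x assume x: "x \<in> derived G (carrier G)"
  have "int p ^ m dvd int p ^ (2*k)" using \<open>m \<le> 2*k\<close> by (simp add: le_imp_power_dvd)
  then have "x \<in> carrier G \<and> int p ^ m dvd deviation (2*k) (\<rho> x) i j" if "i < n" "j < n" for i j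
    using cong_additive.derived_subset_dvd[OF cong_additive_deviation[OF G \<rho> level that]] x by blast
  then show "x \<in> {g \<in> carrier G. \<rho> g \<in> GL_cong p n m}"
    using GL_cong_iff_dvd_deviation[OF hom_GL1_group_padic_mat[OF \<rho>] \<open>m \<le> 2*k\<close>]
      group.derived_in_carrier[OF G] x by blast
qed

lemma GL_cong_Suc_if_pow:
  assumes G: "group G" and \<rho>: "\<rho> \<in> hom G (GL1_group p n)"
    and level: "\<And>g. g \<in> carrier G \<Longrightarrow> \<rho> g \<in> GL_cong p n k" and "2 \<le> k" "p > 0"
    and g: "g \<in> carrier G" and pow: "\<rho> (g [^]\<^bsub>G\<^esub> p) \<in> GL_cong p n (k + 2)"
  shows "\<rho> g \<in> GL_cong p n (k + 1)"
proof -
  have "int p ^ (k + 1) dvd deviation (2*k) (\<rho> g) i j" if ij: "i < n" "j < n" for i j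
  proof -
    have "[deviation (2*k) (\<rho> (g [^]\<^bsub>G\<^esub> p)) i j = int p * deviation (2*k) (\<rho> g) i j] (mod int p ^ (2*k))"
      using cong_additive.cong_additive_pow[OF cong_additive_deviation[OF G \<rho> level ij] g] .
    moreover have "int p ^ (k + 2) dvd int p ^ (2*k)"
      by (rule le_imp_power_dvd) (use \<open>2 \<le> k\<close> in simp)
    moreover have "int p ^ (k + 2) dvd deviation (2*k) (\<rho> (g [^]\<^bsub>G\<^esub> p)) i j"
      using pow ij GL_cong_iff_dvd_deviation[OF hom_GL1_group_padic_mat[OF \<rho>], of _ "k + 2" "2*k"]
        \<open>2 \<le> k\<close> G g by (simp add: group.is_monoid monoid.nat_pow_closed)
    ultimately have "int p * int p ^ (k + 1) dvd int p * deviation (2*k) (\<rho> g) i j"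
      by (simp add: cong_dvd_iff[OF cong_dvd_modulus])
    then show ?thesis using \<open>p > 0\<close> by simp
  qed
  then show ?thesis
    using GL_cong_iff_dvd_deviation[OF hom_GL1_group_padic_mat[OF \<rho> g], of "k + 1" "2*k"] \<open>2 \<le> k\<close>
    by simp
qed

lemma closedin_preimage_GL_cong:
  assumes "topspace T = carrier G" and "\<rho> \<in> hom G (GL1_group p n)"
    and "continuous_map T (GL1_topology p n) \<rho>"
  shows "closedin T {g \<in> carrier G. \<rho> g \<in> GL_cong p n m}"
proof -
  have "{g \<in> carrier G. \<rho> g \<in> GL_cong p n m} = {g \<in> topspace T. \<rho> g \<in> GL_cong p n m \<inter> GL_cong p n 1}"
    using assms(1,2) by (auto simp: hom_def GL1_group_def)
  then show ?thesis
    using closedin_continuous_map_preimage[OF assms(3) closedin_GL_cong] by simp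
qed

lemma pow_mem_closed_commutator:
  assumes tg: "topological_group G T"
    and iso: "G Mod closed_commutator G T \<cong> product_group I (\<lambda>_. integer_mod_group p)"
    and g: "g \<in> carrier G"
  shows "g [^]\<^bsub>G\<^esub> p \<in> closed_commutator G T"
proof -
  have G: "group G" using tg by (simp add: topological_group_def)
  have normal: "closed_commutator G T \<lhd> G"
    unfolding closed_commutator_def
    by (rule normal_closure_of[OF tg group.derived_self_is_normal[OF G]])
  show ?thesis
  proof (rule normal.pow_mem_if_quotient_exponent[OF normal _ g])
    fix A assume "A \<in> carrier (G Mod closed_commutator G T)"
    moreover have "group (product_group I (\<lambda>_. integer_mod_group p))" by (simp add: product_group)
    ultimately show "A [^]\<^bsub>G Mod closed_commutator G T\<^esub> p = \<one>\<^bsub>G Mod closed_commutator G T\<^esub>"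
      using group.iso_pow_eq_one[OF normal.factorgroup_is_group[OF normal] iso]
        product_integer_mod_group_pow_eq_one by blast
  qed
qed

theorem lemma3p2:
  fixes p n d :: nat
    and G :: "('a, 'b) monoid_scheme" and T :: "'a topology"
    and \<rho> :: "'a \<Rightarrow> (nat \<Rightarrow> nat \<Rightarrow> nat \<Rightarrow> int)"
  assumes "Factorial_Ring.prime p" and "odd p"
    and "pro_p_group p G T"
    and "G Mod (closed_commutator G T) \<cong> product_group {..<d} (\<lambda>_. integer_mod_group p)"
    and "\<rho> \<in> hom G (GL1_group p n)"
    and "continuous_map T (GL1_topology p n) \<rho>"
    and "\<exists>g \<in> carrier G. \<rho> g \<noteq> padic_one p n"
  shows "\<exists>g \<in> carrier G. \<rho> g \<notin> GL_cong p n 2"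
proof (rule ccontr)
  define level where "level m \<longleftrightarrow> (\<forall>g\<in>carrier G. \<rho> g \<in> GL_cong p n m)" for m
  assume "\<not> ?thesis"
  then have "level 2" by (simp add: level_def)
  obtain g0 m0 where "g0 \<in> carrier G" "\<rho> g0 \<notin> GL_cong p n m0"
    using assms(7) eq_padic_one_if_in_all_GL_cong by metis
  then have "\<not> level (m0 + 2)"
    unfolding level_def using GL_cong_antimono[of m0 "m0 + 2"] by auto
  then obtain k where k: "2 \<le> k" "level k" "\<not> level (k + 1)"
    using nat_boundary[of 2 "m0 + 2" level] \<open>level 2\<close> by auto
  have tg: "topological_group G T" using assms(3) by (simp add: pro_p_group_def)
  then have G: "group G" and "topspace T = carrier G" by (simp_all add: topological_group_def)
  then have "closed_commutator G T \<subseteq> {g \<in> carrier G. \<rho> g \<in> GL_cong p n (k + 2)}"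
    unfolding closed_commutator_def
    using derived_subset_GL_cong[OF G assms(5), of k "k + 2"] k
      closedin_preimage_GL_cong[OF _ assms(5,6)]
    by (intro closure_of_minimal) (auto simp: level_def)
  moreover obtain g1 where "g1 \<in> carrier G" "\<rho> g1 \<notin> GL_cong p n (k + 1)"
    using k(3) by (auto simp: level_def)
  moreover have "p > 0" using assms(1) prime_gt_0_nat by blast
  ultimately show False
    using GL_cong_Suc_if_pow[OF G assms(5), of k] k pow_mem_closed_commutator[OF tg assms(4)]
    by (auto simp: level_def)
qed

end
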